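(* Let $P$ be the uniform probability measure on $[0,1]$, $Q$ a probability measure on $[0,1]$ with unimodal density $r = dQ/dP$, maximiser $x^*$ and $r_{max}=\sup r<\infty$. Let $B_1,\dots,B_N$ be the first $N$ bounds produced by AS*, $G_N$ the $N$-th Gumbel produced by AS*, and $E_N = e^{-G_N}$. Then $$\mathbb{E}[E_N \mid B_{1:N}] = \sum_{n=1}^N \frac{1}{P(B_n)}.$$
   Context: Unimodal: $r$ non-decreasing on $[0,x^*]$, non-increasing on $[x^*,1]$, $r(x^* ) = r_{max}$. $\mathrm{TG}(\mu,\kappa)$ is the unit-scale Gumbel with location $\mu$ truncated to $(-\infty,\kappa]$ (density $\propto \exp(-(g-\mu)-e^{-(g-\mu)})$ on $g\le\kappa$). AS*: $B_1=[0,1]$, $G_0=+\infty$; for every $n\ge1$ draw $G_n\sim\mathrm{TG}(\log P(B_n),G_{n-1})$ (conditionally on the past) and independently $X_n\sim P(\cdot\cap B_n)/P(B_n)$; set $L_n=\max_{k\le n}(\log r(X_k)+G_k)$, $U_n=\log r_{max}+G_n$, and $B_{n+1}=[\max(\{0\}\cup\{X_k:k\le n,X_k\le x^*\}),\ \min(\{1\}\cup\{X_k:k\le n,X_k\ge x^*\})]$. These sequences are defined for all $n$; the algorithm's number of steps is $T=\min\{n\ge1: L_n\ge U_n\}$. *)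

theory Defs
  imports "HOL-Probability.Probability"
begin

definition P_unif :: "real measure" where
  "P_unif = uniform_measure lborel {0..1}"

definition gumbel_density :: "real \<Rightarrow> real \<Rightarrow> real" where
  "gumbel_density \<mu> g = exp (- (g - \<mu>) - exp (- (g - \<mu>)))"

definition TG :: "real \<Rightarrow> ereal \<Rightarrow> real measure" where
  "TG \<mu> \<kappa> = density lborel (\<lambda>g. ennreal (gumbel_density \<mu> g) * indicator {t. ereal t \<le> \<kappa>} g
        / (\<integral>\<^sup>+ t. ennreal (gumbel_density \<mu> t) * indicator {t. ereal t \<le> \<kappa>} t \<partial>lborel))"

definition AS_lo :: "(nat \<Rightarrow> 'a \<Rightarrow> real) \<Rightarrow> real \<Rightarrow> nat \<Rightarrow> 'a \<Rightarrow> real" where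
  "AS_lo X xs n \<omega> = Max ({0} \<union> {X k \<omega> | k. 1 \<le> k \<and> k < n \<and> X k \<omega> \<le> xs})"

definition AS_hi :: "(nat \<Rightarrow> 'a \<Rightarrow> real) \<Rightarrow> real \<Rightarrow> nat \<Rightarrow> 'a \<Rightarrow> real" where
  "AS_hi X xs n \<omega> = Min ({1} \<union> {X k \<omega> | k. 1 \<le> k \<and> k < n \<and> X k \<omega> \<ge> xs})"

definition AS_B :: "(nat \<Rightarrow> 'a \<Rightarrow> real) \<Rightarrow> real \<Rightarrow> nat \<Rightarrow> 'a \<Rightarrow> real set" where
  "AS_B X xs n \<omega> = {AS_lo X xs n \<omega> .. AS_hi X xs n \<omega>}"

text \<open>Truncation level for G_n: G_0 = +infinity.\<close>
definition AS_prevG :: "(nat \<Rightarrow> 'a \<Rightarrow> real) \<Rightarrow> nat \<Rightarrow> 'a \<Rightarrow> ereal" where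
  "AS_prevG G n \<omega> = (if n \<le> 1 then \<infinity> else ereal (G (n - 1) \<omega>))"

definition gen_sigma :: "'a measure \<Rightarrow> ('a \<Rightarrow> real) set \<Rightarrow> 'a measure" where
  "gen_sigma M fs = sigma (space M) (\<Union>f\<in>fs. {f -` A \<inter> space M | A. A \<in> sets borel})"

definition AS_past :: "'a measure \<Rightarrow> (nat \<Rightarrow> 'a \<Rightarrow> real) \<Rightarrow> (nat \<Rightarrow> 'a \<Rightarrow> real) \<Rightarrow> nat \<Rightarrow> 'a measure" where
  "AS_past M G X n = gen_sigma M ({G k | k. 1 \<le> k \<and> k < n} \<union> {X k | k. 1 \<le> k \<and> k < n})"

text \<open>The process (G_n, X_n)_{n>=1} on M follows AS*: conditionally on the past,
  G_n ~ TG(log P(B_n), G_(n-1)) and independently X_n ~ P(. inter B_n)/P(B_n).\<close>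
definition is_AS_star :: "'a measure \<Rightarrow> real \<Rightarrow> (nat \<Rightarrow> 'a \<Rightarrow> real) \<Rightarrow> (nat \<Rightarrow> 'a \<Rightarrow> real) \<Rightarrow> bool" where
  "is_AS_star M xs G X \<longleftrightarrow>
     (\<forall>n\<ge>1. G n \<in> borel_measurable M \<and> X n \<in> borel_measurable M) \<and>
     (\<forall>n\<ge>1. \<forall>h \<in> borel_measurable (borel :: (real \<times> real) measure).
        AE \<omega> in M. nn_cond_exp M (AS_past M G X n) (\<lambda>\<omega>'. h (G n \<omega>', X n \<omega>')) \<omega>
          = (\<integral>\<^sup>+ z. h z \<partial>(TG (ln (measure P_unif (AS_B X xs n \<omega>))) (AS_prevG G n \<omega>)
                         \<Otimes>\<^sub>M uniform_measure P_unif (AS_B X xs n \<omega>))))"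

end

theory Submission
  imports Defs
begin

(* If G has the unit Gumbel law with location mu truncated to (-infinity, kappa], then
   E[exp(-G)] = exp(-mu) + exp(-kappa), because (exp(-mu) + exp(-t)) F(t) is an
   antiderivative of exp(-t) times the Gumbel density, F being the Gumbel distribution
   function.  For AS* (mu = log P(B_n), kappa = G_(n-1)) this says that the conditional
   mean of E_n = exp(-G_n) given the past is 1/P(B_n) + E_(n-1).

   The bounds B_1, ..., B_N are functions of the history X_1, ..., X_(N-1), so it suffices
   to show E[E_N Psi] = E[(1/P(B_1) + ... + 1/P(B_N)) Psi] for every measurable function Psi
   of that history.  This goes by induction on N: E_N Psi(X_1, ..., X_N) has the same
   integral as E_(N-1) Psi'(X_1, ..., X_(N-1)) plus the new term, where Psi' integrates
   X_N out against the uniform law on B_N; this uses that G_N and X_N are conditionally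
   independent given the past, so E_N can be replaced by its conditional mean before and
   after X_N is integrated out. *)

section \<open>Moments of the truncated Gumbel distribution\<close>

lemma nn_integral_FTC_atMost:
  fixes f F :: "real \<Rightarrow> real"
  assumes f_borel[measurable]: "f \<in> borel_measurable borel"
    and F': "\<And>x. DERIV F x :> f x" and f_nonneg: "\<And>x. 0 \<le> f x"
    and lim: "(F \<longlongrightarrow> 0) at_bot"
  shows "(\<integral>\<^sup>+x. ennreal (f x) * indicator {..b} x \<partial>lborel) = F b"
proof -
  have "(\<integral>\<^sup>+x. ennreal (f x) * indicator {..b} x \<partial>lborel)
      = (\<integral>\<^sup>+x. ennreal (f (- x)) * indicator {- b..} x \<partial>lborel)"
    using nn_integral_real_affine[of "\<lambda>x. ennreal (f x) * indicator {..b} x" "-1" 0]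
    by (auto simp: indicator_def intro!: nn_integral_cong)
  also have "\<dots> = 0 - (- F (- (- b)))"
  proof (rule nn_integral_FTC_atLeast)
    show "DERIV (\<lambda>x. - F (- x)) x :> f (- x)" for x
    proof -
      have "DERIV (\<lambda>x. F (- x)) x :> f (- x) * - 1"
        by (intro DERIV_chain2[OF F'] derivative_eq_intros) auto
      from DERIV_minus[OF this] show ?thesis by simp
    qed
    show "((\<lambda>x. - F (- x)) \<longlongrightarrow> 0) at_top"
      using tendsto_minus[OF lim[unfolded filterlim_at_bot_mirror]] by simp
    show "(\<lambda>x. f (- x)) \<in> borel_measurable borel"
      by measurable
  qed (rule f_nonneg)
  finally show ?thesis by simp
qed

lemma nn_integral_FTC_real_line:
  fixes f F :: "real \<Rightarrow> real"
  assumes f_borel[measurable]: "f \<in> borel_measurable borel"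
    and F': "\<And>x. DERIV F x :> f x" and f_nonneg: "\<And>x. 0 \<le> f x"
    and lim_bot: "(F \<longlongrightarrow> 0) at_bot" and lim_top: "(F \<longlongrightarrow> L) at_top"
  shows "(\<integral>\<^sup>+x. ennreal (f x) \<partial>lborel) = L"
proof -
  have mono: "F x \<le> F y" if "x \<le> y" for x y
    by (rule DERIV_nonneg_imp_nondecreasing[OF that]) (blast intro: F' f_nonneg)
  have "0 \<le> F 0"
    using lim_bot by (rule tendsto_upperbound) (auto intro: mono eventually_at_bot_linorderI[of 0])
  have "F 0 \<le> L"
    using lim_top by (rule tendsto_lowerbound) (auto intro: mono eventually_at_top_linorderI[of 0])
  have "(\<integral>\<^sup>+x. ennreal (f x) \<partial>lborel)
      = (\<integral>\<^sup>+x. ennreal (f x) * indicator {..0} x + ennreal (f x) * indicator {0..} x \<partial>lborel)"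
    by (rule nn_integral_cong_AE, rule eventually_mono[OF AE_lborel_singleton[of 0]])
       (auto simp: indicator_def)
  also have "\<dots> = (\<integral>\<^sup>+x. ennreal (f x) * indicator {..0} x \<partial>lborel)
      + (\<integral>\<^sup>+x. ennreal (f x) * indicator {0..} x \<partial>lborel)"
    by (rule nn_integral_add) measurable
  also have "\<dots> = ennreal (F 0) + ennreal (L - F 0)"
    using nn_integral_FTC_atMost[OF f_borel F' f_nonneg lim_bot, of 0]
      nn_integral_FTC_atLeast[OF f_borel F' f_nonneg lim_top, of 0] by simp
  also have "\<dots> = ennreal L"
    using \<open>0 \<le> F 0\<close> \<open>F 0 \<le> L\<close> by (subst ennreal_plus[symmetric]) auto
  finally show ?thesis .
qed

definition gumbel_cdf :: "real \<Rightarrow> real \<Rightarrow> real" where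
  "gumbel_cdf \<mu> t = exp (- exp (\<mu> - t))"

lemma gumbel_density_eq: "gumbel_density \<mu> t = exp (\<mu> - t) * gumbel_cdf \<mu> t"
proof -
  have "exp (\<mu> - t) * exp (- exp (\<mu> - t)) = exp (\<mu> - t + - exp (\<mu> - t))"
    by (rule mult_exp_exp)
  then show ?thesis by (simp add: gumbel_density_def gumbel_cdf_def)
qed

lemma gumbel_density_nonneg: "0 \<le> gumbel_density \<mu> t"
  by (simp add: gumbel_density_def)

lemma borel_measurable_gumbel_density[measurable]: "gumbel_density \<mu> \<in> borel_measurable borel"
  unfolding gumbel_density_def[abs_def] by measurable

lemma DERIV_gumbel_cdf: "DERIV (gumbel_cdf \<mu>) t :> gumbel_density \<mu> t"
  unfolding gumbel_cdf_def[abs_def] gumbel_density_eq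
  by (auto intro!: derivative_eq_intros simp: gumbel_cdf_def)

lemma DERIV_gumbel_exp_neg_antideriv:
  "DERIV (\<lambda>t. (exp (- \<mu>) + exp (- t)) * gumbel_cdf \<mu> t) t :> exp (- t) * gumbel_density \<mu> t"
proof -
  have e: "exp (- t) = exp (- \<mu>) * exp (\<mu> - t)"
    by (simp add: mult_exp_exp)
  have "DERIV (\<lambda>t. (exp (- \<mu>) + exp (- t)) * gumbel_cdf \<mu> t) t
      :> - exp (- t) * gumbel_cdf \<mu> t + (exp (- \<mu>) + exp (- t)) * gumbel_density \<mu> t"
    by (auto intro!: derivative_eq_intros DERIV_gumbel_cdf)
  moreover have "- exp (- t) * gumbel_cdf \<mu> t + (exp (- \<mu>) + exp (- t)) * gumbel_density \<mu> t
      = exp (- t) * gumbel_density \<mu> t"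
    unfolding gumbel_density_eq e by (simp add: algebra_simps)
  ultimately show ?thesis by simp
qed

lemma tendsto_exp_neg_exp_at_top: "((\<lambda>x::real. exp (- exp (c + x))) \<longlongrightarrow> 0) at_top"
proof -
  have "filterlim (\<lambda>x. c + x) at_top at_top"
    by (rule filterlim_tendsto_add_at_top[OF tendsto_const filterlim_ident])
  then have "filterlim (\<lambda>x. exp (c + x)) at_top at_top"
    by (rule filterlim_compose[OF exp_at_top])
  then have "filterlim (\<lambda>x. - exp (c + x)) at_bot at_top"
    by (simp add: filterlim_uminus_at_top)
  then show ?thesis by (rule filterlim_compose[OF exp_at_bot])
qed

lemma gumbel_cdf_at_bot: "(gumbel_cdf \<mu> \<longlongrightarrow> 0) at_bot"
  unfolding filterlim_at_bot_mirror gumbel_cdf_def using tendsto_exp_neg_exp_at_top[of \<mu>] by simp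

lemma gumbel_cdf_at_top: "(gumbel_cdf \<mu> \<longlongrightarrow> 1) at_top"
proof -
  have "((\<lambda>t::real. exp (- t)) \<longlongrightarrow> 0) at_top"
    using filterlim_compose[OF exp_at_bot filterlim_uminus_at_bot_at_top] .
  then have "((\<lambda>t. exp \<mu> * exp (- t)) \<longlongrightarrow> exp \<mu> * 0) at_top"
    by (intro tendsto_mult tendsto_const)
  then have "((\<lambda>t. exp (\<mu> - t)) \<longlongrightarrow> 0) at_top"
    by (simp add: mult_exp_exp)
  from tendsto_exp[OF tendsto_minus[OF this]] show ?thesis
    unfolding gumbel_cdf_def by simp
qed

lemma gumbel_exp_neg_antideriv_at_bot:
  "((\<lambda>t. (exp (- \<mu>) + exp (- t)) * gumbel_cdf \<mu> t) \<longlongrightarrow> 0) at_bot"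
proof -
  have "filterlim (\<lambda>x. exp (\<mu> + x)) at_top at_top"
    by (rule filterlim_compose[OF exp_at_top filterlim_tendsto_add_at_top[OF tendsto_const filterlim_ident]])
  from filterlim_compose[OF tendsto_power_div_exp_0[where k = 1] this]
  have "((\<lambda>x. exp (\<mu> + x) * exp (- exp (\<mu> + x))) \<longlongrightarrow> 0) at_top"
    by (simp add: exp_minus field_simps)
  then have lim: "((\<lambda>x. exp (- \<mu>) * exp (- exp (\<mu> + x)) + exp (- \<mu>) * (exp (\<mu> + x) * exp (- exp (\<mu> + x))))
      \<longlongrightarrow> exp (- \<mu>) * 0 + exp (- \<mu>) * 0) at_top"
    by (intro tendsto_intros tendsto_exp_neg_exp_at_top)
  have eq: "(exp (- \<mu>) + exp (- (- x))) * exp (- exp (\<mu> - (- x)))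
      = exp (- \<mu>) * exp (- exp (\<mu> + x)) + exp (- \<mu>) * (exp (\<mu> + x) * exp (- exp (\<mu> + x)))" for x
    by (simp add: distrib_right mult.assoc[symmetric] mult_exp_exp)
  show ?thesis
    unfolding filterlim_at_bot_mirror gumbel_cdf_def eq using lim by simp
qed

lemma gumbel_exp_neg_antideriv_at_top:
  "((\<lambda>t. (exp (- \<mu>) + exp (- t)) * gumbel_cdf \<mu> t) \<longlongrightarrow> exp (- \<mu>)) at_top"
proof -
  have "((\<lambda>t. (exp (- \<mu>) + exp (- t)) * gumbel_cdf \<mu> t) \<longlongrightarrow> (exp (- \<mu>) + 0) * 1) at_top"
    by (intro tendsto_intros gumbel_cdf_at_top filterlim_compose[OF exp_at_bot filterlim_uminus_at_bot_at_top])
  then show ?thesis by simp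
qed

lemma nn_integral_gumbel_density_le:
  assumes "\<kappa> \<noteq> - \<infinity>"
  shows "(\<integral>\<^sup>+t. ennreal (gumbel_density \<mu> t) * indicator {t. ereal t \<le> \<kappa>} t \<partial>lborel)
    = ennreal (if \<kappa> = \<infinity> then 1 else gumbel_cdf \<mu> (real_of_ereal \<kappa>))"
proof (cases \<kappa>)
  case (real k)
  have "{t. ereal t \<le> ereal k} = {..k}" by auto
  with real show ?thesis
    using nn_integral_FTC_atMost[OF _ DERIV_gumbel_cdf gumbel_density_nonneg gumbel_cdf_at_bot] by simp
next
  case PInf
  then show ?thesis
    using nn_integral_FTC_real_line[OF _ DERIV_gumbel_cdf gumbel_density_nonneg gumbel_cdf_at_bot gumbel_cdf_at_top]
    by simp
qed (use assms in simp)

lemma nn_integral_exp_neg_gumbel_density_le: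
  assumes "\<kappa> \<noteq> - \<infinity>"
  shows "(\<integral>\<^sup>+t. ennreal (exp (- t) * gumbel_density \<mu> t) * indicator {t. ereal t \<le> \<kappa>} t \<partial>lborel)
    = ennreal (exp (- \<mu>) + (if \<kappa> = \<infinity> then 0 else exp (- real_of_ereal \<kappa>)))
      * (\<integral>\<^sup>+t. ennreal (gumbel_density \<mu> t) * indicator {t. ereal t \<le> \<kappa>} t \<partial>lborel)"
proof -
  have nonneg: "0 \<le> exp (- t) * gumbel_density \<mu> t" for t
    by (simp add: gumbel_density_nonneg)
  show ?thesis
  proof (cases \<kappa>)
    case (real k)
    have set: "{t. ereal t \<le> \<kappa>} = {..k}" and tail: "(if \<kappa> = \<infinity> then 0 else exp (- real_of_ereal \<kappa>)) = exp (- k)"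
      using real by auto
    have "(\<integral>\<^sup>+t. ennreal (exp (- t) * gumbel_density \<mu> t) * indicator {..k} t \<partial>lborel)
        = ennreal ((exp (- \<mu>) + exp (- k)) * gumbel_cdf \<mu> k)"
      by (rule nn_integral_FTC_atMost[OF _ DERIV_gumbel_exp_neg_antideriv nonneg gumbel_exp_neg_antideriv_at_bot])
         measurable
    also have "\<dots> = ennreal (exp (- \<mu>) + exp (- k)) * ennreal (gumbel_cdf \<mu> k)"
      by (rule ennreal_mult) (auto simp: gumbel_cdf_def)
    also have "ennreal (gumbel_cdf \<mu> k) = (\<integral>\<^sup>+t. ennreal (gumbel_density \<mu> t) * indicator {..k} t \<partial>lborel)"
      by (rule nn_integral_FTC_atMost[OF _ DERIV_gumbel_cdf gumbel_density_nonneg gumbel_cdf_at_bot, symmetric])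
         measurable
    finally show ?thesis unfolding set tail .
  next
    case PInf
    then show ?thesis
      using nn_integral_FTC_real_line[OF _ DERIV_gumbel_exp_neg_antideriv nonneg
          gumbel_exp_neg_antideriv_at_bot gumbel_exp_neg_antideriv_at_top]
        nn_integral_FTC_real_line[OF _ DERIV_gumbel_cdf gumbel_density_nonneg gumbel_cdf_at_bot gumbel_cdf_at_top]
      by simp
  qed (use assms in simp)
qed

lemma sets_TG[measurable_cong]: "sets (TG \<mu> \<kappa>) = sets borel"
  by (simp add: TG_def)

lemma nn_integral_TG:
  assumes [measurable]: "f \<in> borel_measurable borel"
  shows "(\<integral>\<^sup>+g. f g \<partial>TG \<mu> \<kappa>)
    = (\<integral>\<^sup>+g. ennreal (gumbel_density \<mu> g) * indicator {t. ereal t \<le> \<kappa>} g * f g \<partial>lborel)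
      / (\<integral>\<^sup>+t. ennreal (gumbel_density \<mu> t) * indicator {t. ereal t \<le> \<kappa>} t \<partial>lborel)"
proof -
  let ?d = "\<lambda>g. ennreal (gumbel_density \<mu> g) * indicator {t. ereal t \<le> \<kappa>} g"
    and ?Z = "\<integral>\<^sup>+t. ennreal (gumbel_density \<mu> t) * indicator {t. ereal t \<le> \<kappa>} t \<partial>lborel"
  have "(\<integral>\<^sup>+g. f g \<partial>TG \<mu> \<kappa>) = (\<integral>\<^sup>+g. ?d g / ?Z * f g \<partial>lborel)"
    unfolding TG_def by (rule nn_integral_density) measurable
  also have "\<dots> = (\<integral>\<^sup>+g. ?d g * f g / ?Z \<partial>lborel)"
    by (simp add: divide_ennreal_def mult_ac)
  also have "\<dots> = (\<integral>\<^sup>+g. ?d g * f g \<partial>lborel) / ?Z"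
    by (rule nn_integral_divide) measurable
  finally show ?thesis .
qed

lemma nn_integral_gumbel_density_le_pos_finite:
  assumes "\<kappa> \<noteq> - \<infinity>"
  shows "(\<integral>\<^sup>+t. ennreal (gumbel_density \<mu> t) * indicator {t. ereal t \<le> \<kappa>} t \<partial>lborel) \<noteq> 0"
    and "(\<integral>\<^sup>+t. ennreal (gumbel_density \<mu> t) * indicator {t. ereal t \<le> \<kappa>} t \<partial>lborel) < \<infinity>"
  unfolding nn_integral_gumbel_density_le[OF assms] by (auto simp: gumbel_cdf_def)

lemma prob_space_TG:
  assumes "\<kappa> \<noteq> - \<infinity>"
  shows "prob_space (TG \<mu> \<kappa>)"
proof
  have "emeasure (TG \<mu> \<kappa>) (space (TG \<mu> \<kappa>)) = (\<integral>\<^sup>+g. 1 \<partial>TG \<mu> \<kappa>)"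
    by simp
  also have "\<dots> = 1"
    using nn_integral_TG[of "\<lambda>_. 1" \<mu> \<kappa>] nn_integral_gumbel_density_le_pos_finite[OF assms]
    by simp
  finally show "emeasure (TG \<mu> \<kappa>) (space (TG \<mu> \<kappa>)) = 1" .
qed

lemma nn_integral_exp_neg_TG:
  assumes "\<kappa> \<noteq> - \<infinity>"
  shows "(\<integral>\<^sup>+g. ennreal (exp (- g)) \<partial>TG \<mu> \<kappa>)
    = ennreal (exp (- \<mu>) + (if \<kappa> = \<infinity> then 0 else exp (- real_of_ereal \<kappa>)))"
proof -
  have "(\<integral>\<^sup>+g. ennreal (exp (- g)) \<partial>TG \<mu> \<kappa>)
      = (\<integral>\<^sup>+g. ennreal (gumbel_density \<mu> g) * indicator {t. ereal t \<le> \<kappa>} g * ennreal (exp (- g)) \<partial>lborel)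
        / (\<integral>\<^sup>+t. ennreal (gumbel_density \<mu> t) * indicator {t. ereal t \<le> \<kappa>} t \<partial>lborel)"
    by (rule nn_integral_TG) measurable
  also have "(\<integral>\<^sup>+g. ennreal (gumbel_density \<mu> g) * indicator {t. ereal t \<le> \<kappa>} g * ennreal (exp (- g)) \<partial>lborel)
      = (\<integral>\<^sup>+t. ennreal (exp (- t) * gumbel_density \<mu> t) * indicator {t. ereal t \<le> \<kappa>} t \<partial>lborel)"
    by (intro nn_integral_cong) (simp add: ennreal_mult gumbel_density_nonneg mult_ac)
  finally show ?thesis
    using nn_integral_gumbel_density_le_pos_finite[OF assms]
    by (simp add: nn_integral_exp_neg_gumbel_density_le[OF assms] ennreal_times_divide[symmetric])
qed

section \<open>Generated sigma-algebras and uniform kernels\<close>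

lemma space_gen_sigma[simp]: "space (gen_sigma M fs) = space M"
  unfolding gen_sigma_def by (rule space_measure_of) auto

lemma sets_gen_sigma:
  "sets (gen_sigma M fs) = sigma_sets (space M) (\<Union>f\<in>fs. {f -` A \<inter> space M | A. A \<in> sets borel})"
  unfolding gen_sigma_def by (rule sets_measure_of) auto

lemma measurable_gen_sigma: "f \<in> fs \<Longrightarrow> f \<in> borel_measurable (gen_sigma M fs)"
  by (rule measurableI) (auto simp: sets_gen_sigma)

lemma sets_gen_sigma_subset:
  assumes "space N = space M" and "\<And>f. f \<in> fs \<Longrightarrow> f \<in> borel_measurable N"
  shows "sets (gen_sigma M fs) \<subseteq> sets N"
  unfolding sets_gen_sigma
proof (rule sets.sigma_sets_subset')
  show "space M \<in> sets N"
    using sets.top[of N] by (simp add: assms(1))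
  show "(\<Union>f\<in>fs. {f -` A \<inter> space M | A. A \<in> sets borel}) \<subseteq> sets N"
    using measurable_sets[OF assms(2)] by (auto simp: assms(1)[symmetric])
qed

lemma subalgebra_gen_sigma:
  "(\<And>f. f \<in> fs \<Longrightarrow> f \<in> borel_measurable M) \<Longrightarrow> subalgebra M (gen_sigma M fs)"
  unfolding subalgebra_def using sets_gen_sigma_subset[of M M fs] by auto

lemma sigma_finite_subalgebra_gen_sigma:
  assumes "finite_measure M" and "\<And>f. f \<in> fs \<Longrightarrow> f \<in> borel_measurable M"
  shows "sigma_finite_subalgebra M (gen_sigma M fs)"
  using assms subalgebra_gen_sigma
  by (intro finite_measure_subalgebra_is_sigma_finite)
     (auto simp: finite_measure_subalgebra_def finite_measure_subalgebra_axioms_def)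

lemma sets_P_unif[measurable_cong]: "sets P_unif = sets borel"
  by (simp add: P_unif_def)

lemma space_P_unif[simp]: "space P_unif = UNIV"
  by (simp add: P_unif_def)

lemma emeasure_P_unif: "A \<in> sets borel \<Longrightarrow> emeasure P_unif A = emeasure lborel (A \<inter> {0..1})"
  by (simp add: P_unif_def emeasure_uniform_measure Int_commute divide_ennreal_def)

lemma measure_P_unif_Icc:
  assumes "0 \<le> a" "a \<le> b" "b \<le> 1"
  shows "measure P_unif {a..b} = b - a"
proof -
  have "{a..b} \<inter> {0..1} = {a..b}" using assms by auto
  then show ?thesis using assms by (simp add: measure_def emeasure_P_unif)
qed

lemma prob_space_P_unif: "prob_space P_unif"
  unfolding P_unif_def by (rule prob_space_uniform_measure) auto

lemma subprob_space_uniform_P_unif: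
  assumes "S \<in> sets borel"
  shows "subprob_space (uniform_measure P_unif S)"
proof
  interpret prob_space P_unif by (rule prob_space_P_unif)
  have "emeasure (uniform_measure P_unif S) UNIV = emeasure P_unif S / emeasure P_unif S"
    using assms by (simp add: emeasure_uniform_measure)
  also have "\<dots> \<le> 1"
    by (cases "emeasure P_unif S = 0") (auto simp: less_top[symmetric] emeasure_finite)
  finally show "emeasure (uniform_measure P_unif S) (space (uniform_measure P_unif S)) \<le> 1"
    by simp
qed simp

lemma measurable_uniform_P_unif_Icc:
  assumes [measurable]: "a \<in> borel_measurable N" "b \<in> borel_measurable N"
  shows "(\<lambda>x. uniform_measure P_unif {a x..b x}) \<in> measurable N (subprob_algebra borel)"
proof (rule measurable_subprob_algebra)
  interpret prob_space P_unif by (rule prob_space_P_unif)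
  fix S :: "real set" assume [measurable]: "S \<in> sets borel"
  have emeasure_Icc_Int: "(\<lambda>x. emeasure P_unif (T \<inter> {a x..b x})) \<in> borel_measurable N"
    if [measurable]: "T \<in> sets borel" for T
  proof -
    have "{z \<in> space (N \<Otimes>\<^sub>M P_unif). snd z \<in> T \<and> a (fst z) \<le> snd z \<and> snd z \<le> b (fst z)}
        \<in> sets (N \<Otimes>\<^sub>M P_unif)"
      by measurable
    from measurable_emeasure_Pair[OF this] show ?thesis
      by (rule measurable_cong[THEN iffD1, rotated])
         (auto simp: space_pair_measure intro!: arg_cong[where f = "emeasure P_unif"])
  qed
  show "(\<lambda>x. emeasure (uniform_measure P_unif {a x..b x}) S) \<in> borel_measurable N"
    using emeasure_Icc_Int[of S] emeasure_Icc_Int[of UNIV]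
    by (simp add: emeasure_uniform_measure Int_commute)
qed (auto intro: subprob_space_uniform_P_unif simp: sets_P_unif)

section \<open>Integration against a conditional kernel\<close>

lemma nn_integral_pair_measure_mult:
  fixes f :: "'a \<Rightarrow> ennreal" and g :: "'b \<Rightarrow> ennreal"
  assumes "sigma_finite_measure N"
    and [measurable]: "f \<in> borel_measurable M" "g \<in> borel_measurable N"
  shows "(\<integral>\<^sup>+z. f (fst z) * g (snd z) \<partial>(M \<Otimes>\<^sub>M N)) = (\<integral>\<^sup>+x. f x \<partial>M) * (\<integral>\<^sup>+y. g y \<partial>N)"
proof -
  interpret N: sigma_finite_measure N by fact
  have "(\<integral>\<^sup>+z. f (fst z) * g (snd z) \<partial>(M \<Otimes>\<^sub>M N)) = (\<integral>\<^sup>+x. \<integral>\<^sup>+y. f x * g y \<partial>N \<partial>M)"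
    by (subst N.nn_integral_fst[symmetric]) simp_all
  also have "\<dots> = (\<integral>\<^sup>+x. f x * (\<integral>\<^sup>+y. g y \<partial>N) \<partial>M)"
    by (simp add: nn_integral_cmult)
  also have "\<dots> = (\<integral>\<^sup>+x. f x \<partial>M) * (\<integral>\<^sup>+y. g y \<partial>N)"
    by (rule nn_integral_multc) simp
  finally show ?thesis .
qed

lemma nn_integral_cond_kernel:
  fixes V c :: "'a \<Rightarrow> ennreal" and Y :: "'a \<Rightarrow> 'b" and K :: "'a \<Rightarrow> 'b measure"
    and \<Phi> :: "'a \<times> 'b \<Rightarrow> ennreal"
  assumes sub: "sigma_finite_subalgebra M F" and prob: "prob_space M"
    and Y[measurable]: "Y \<in> measurable M E" and V[measurable]: "V \<in> borel_measurable M"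
    and c[measurable]: "c \<in> borel_measurable F" and c_finite: "\<And>\<omega>. \<omega> \<in> space M \<Longrightarrow> c \<omega> < \<infinity>"
    and K[measurable]: "K \<in> measurable F (subprob_algebra E)"
    and cond: "\<And>S. S \<in> sets E \<Longrightarrow>
      AE \<omega> in M. nn_cond_exp M F (\<lambda>\<omega>. V \<omega> * indicator S (Y \<omega>)) \<omega> = c \<omega> * emeasure (K \<omega>) S"
    and \<Phi>[measurable]: "\<Phi> \<in> borel_measurable (F \<Otimes>\<^sub>M E)"
  shows "(\<integral>\<^sup>+\<omega>. V \<omega> * \<Phi> (\<omega>, Y \<omega>) \<partial>M) = (\<integral>\<^sup>+\<omega>. c \<omega> * (\<integral>\<^sup>+y. \<Phi> (\<omega>, y) \<partial>K \<omega>) \<partial>M)"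
proof -
  interpret sigma_finite_subalgebra M F by (rule sub)
  interpret prob_space M by (rule prob)
  have space_F: "space F = space M"
    using subalg by (simp add: subalgebra_def)
  have ident[measurable]: "(\<lambda>\<omega>. \<omega>) \<in> measurable M F"
    using subalg sets.sets_into_space[of _ F] by (intro measurableI) (auto simp: subalgebra_def)
  have [measurable]: "c \<in> borel_measurable M"
    using measurable_from_subalg[OF subalg c] .
  define L where "L = distr (density M c) F (\<lambda>\<omega>. \<omega>)"
  have sets_L[measurable_cong]: "sets L = sets F"
    by (simp add: L_def)
  define kern where "kern \<omega> = distr (K \<omega>) (F \<Otimes>\<^sub>M E) (Pair \<omega>)" for \<omega>
  have kern: "kern \<in> measurable L (subprob_algebra (F \<Otimes>\<^sub>M E))"
    unfolding kern_def
  proof (rule measurable_distr2)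
    have "(\<lambda>z. z) \<in> measurable (L \<Otimes>\<^sub>M E) (F \<Otimes>\<^sub>M E)"
      by (rule measurable_ident_sets[OF sets_pair_measure_cong[OF sets_L refl]])
    then show "case_prod Pair \<in> measurable (L \<Otimes>\<^sub>M E) (F \<Otimes>\<^sub>M E)"
      by (simp add: id_def)
    show "K \<in> measurable L (subprob_algebra E)"
      using K by (simp add: measurable_cong_sets[OF sets_L refl])
  qed
  have sets_K: "\<omega> \<in> space M \<Longrightarrow> sets (K \<omega>) = sets E" for \<omega>
    using subprob_measurableD(2)[OF K] space_F by auto
  define \<mu>\<^sub>1 where "\<mu>\<^sub>1 = distr (density M V) (F \<Otimes>\<^sub>M E) (\<lambda>\<omega>. (\<omega>, Y \<omega>))"
  define \<mu>\<^sub>2 where "\<mu>\<^sub>2 = L \<bind> kern"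
  have sets_\<mu>\<^sub>1: "sets \<mu>\<^sub>1 = sets (F \<Otimes>\<^sub>M E)" and sets_\<mu>\<^sub>2: "sets \<mu>\<^sub>2 = sets (F \<Otimes>\<^sub>M E)"
    using not_empty by (auto simp: \<mu>\<^sub>1_def \<mu>\<^sub>2_def kern_def L_def space_F intro!: sets_bind)
  have integral_\<mu>\<^sub>1: "(\<integral>\<^sup>+z. h z \<partial>\<mu>\<^sub>1) = (\<integral>\<^sup>+\<omega>. V \<omega> * h (\<omega>, Y \<omega>) \<partial>M)"
    if [measurable]: "h \<in> borel_measurable (F \<Otimes>\<^sub>M E)" for h
  proof -
    have "(\<integral>\<^sup>+z. h z \<partial>\<mu>\<^sub>1) = (\<integral>\<^sup>+\<omega>. h (\<omega>, Y \<omega>) \<partial>density M V)"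
      unfolding \<mu>\<^sub>1_def by (rule nn_integral_distr) measurable
    also have "\<dots> = (\<integral>\<^sup>+\<omega>. V \<omega> * h (\<omega>, Y \<omega>) \<partial>M)"
      by (rule nn_integral_density) measurable
    finally show ?thesis .
  qed
  have integral_\<mu>\<^sub>2: "(\<integral>\<^sup>+z. h z \<partial>\<mu>\<^sub>2) = (\<integral>\<^sup>+\<omega>. c \<omega> * (\<integral>\<^sup>+y. h (\<omega>, y) \<partial>K \<omega>) \<partial>M)"
    if [measurable]: "h \<in> borel_measurable (F \<Otimes>\<^sub>M E)" for h
  proof -
    have inner[measurable]: "(\<lambda>\<omega>. \<integral>\<^sup>+y. h (\<omega>, y) \<partial>K \<omega>) \<in> borel_measurable F"
      by (rule nn_integral_measurable_subprob_algebra2[OF _ K]) simp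
    have "(\<integral>\<^sup>+z. h z \<partial>\<mu>\<^sub>2) = (\<integral>\<^sup>+\<omega>. \<integral>\<^sup>+z. h z \<partial>kern \<omega> \<partial>L)"
      unfolding \<mu>\<^sub>2_def by (rule nn_integral_bind[OF that kern])
    also have "\<dots> = (\<integral>\<^sup>+\<omega>. \<integral>\<^sup>+y. h (\<omega>, y) \<partial>K \<omega> \<partial>L)"
    proof (rule nn_integral_cong)
      fix \<omega> assume "\<omega> \<in> space L"
      then have \<omega>: "\<omega> \<in> space M"
        by (simp add: L_def space_F)
      have "Pair \<omega> \<in> measurable E (F \<Otimes>\<^sub>M E)"
        using \<omega> space_F by (intro measurable_Pair1') simp
      then have "Pair \<omega> \<in> measurable (K \<omega>) (F \<Otimes>\<^sub>M E)"
        by (simp add: measurable_cong_sets[OF sets_K[OF \<omega>] refl])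
      then show "(\<integral>\<^sup>+z. h z \<partial>kern \<omega>) = (\<integral>\<^sup>+y. h (\<omega>, y) \<partial>K \<omega>)"
        unfolding kern_def by (rule nn_integral_distr) measurable
    qed
    also have "\<dots> = (\<integral>\<^sup>+\<omega>. (\<integral>\<^sup>+y. h (\<omega>, y) \<partial>K \<omega>) \<partial>density M c)"
      unfolding L_def
      by (rule nn_integral_distr)
         (simp_all add: measurable_cong_sets[OF sets_density refl] measurable_cong_sets[OF sets_distr refl] ident inner)
    also have "\<dots> = (\<integral>\<^sup>+\<omega>. c \<omega> * (\<integral>\<^sup>+y. h (\<omega>, y) \<partial>K \<omega>) \<partial>M)"
      by (rule nn_integral_density) measurable
    finally show ?thesis .
  qed
  have emeasure_\<mu>\<^sub>2: "emeasure \<mu>\<^sub>2 (A \<times> S) = (\<integral>\<^sup>+\<omega>. indicator A \<omega> * (c \<omega> * emeasure (K \<omega>) S) \<partial>M)"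
    if [measurable]: "A \<in> sets F" "S \<in> sets E" for A S
  proof -
    have "emeasure \<mu>\<^sub>2 (A \<times> S) = (\<integral>\<^sup>+z. indicator (A \<times> S) z \<partial>\<mu>\<^sub>2)"
      using sets_\<mu>\<^sub>2 by simp
    also have "\<dots> = (\<integral>\<^sup>+\<omega>. c \<omega> * (\<integral>\<^sup>+y. indicator A \<omega> * indicator S y \<partial>K \<omega>) \<partial>M)"
      by (subst integral_\<mu>\<^sub>2) (auto simp: indicator_times)
    also have "\<dots> = (\<integral>\<^sup>+\<omega>. indicator A \<omega> * (c \<omega> * emeasure (K \<omega>) S) \<partial>M)"
      by (intro nn_integral_cong) (simp add: nn_integral_cmult_indicator sets_K mult_ac)
    finally show ?thesis .
  qed
  have rectangle: "emeasure \<mu>\<^sub>1 (A \<times> S) = emeasure \<mu>\<^sub>2 (A \<times> S)"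
    if [measurable]: "A \<in> sets F" "S \<in> sets E" for A S
  proof -
    have "emeasure \<mu>\<^sub>1 (A \<times> S) = (\<integral>\<^sup>+z. indicator (A \<times> S) z \<partial>\<mu>\<^sub>1)"
      using sets_\<mu>\<^sub>1 by simp
    also have "\<dots> = (\<integral>\<^sup>+\<omega>. indicator A \<omega> * (V \<omega> * indicator S (Y \<omega>)) \<partial>M)"
      by (subst integral_\<mu>\<^sub>1) (auto simp: indicator_times mult_ac intro!: nn_integral_cong)
    also have "\<dots> = (\<integral>\<^sup>+\<omega>. indicator A \<omega> * nn_cond_exp M F (\<lambda>\<omega>. V \<omega> * indicator S (Y \<omega>)) \<omega> \<partial>M)"
      by (rule nn_cond_exp_intg[symmetric]) measurable
    also have "\<dots> = (\<integral>\<^sup>+\<omega>. indicator A \<omega> * (c \<omega> * emeasure (K \<omega>) S) \<partial>M)"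
      using cond[OF that(2)] by (intro nn_integral_cong_AE) auto
    finally show ?thesis
      using emeasure_\<mu>\<^sub>2[OF that] by simp
  qed
  define truncation where "truncation i = {\<omega> \<in> space F. c \<omega> \<le> of_nat i} \<times> space E" for i :: nat
  have sets_truncation: "{\<omega> \<in> space F. c \<omega> \<le> of_nat i} \<in> sets F" for i :: nat
    by measurable
  \<comment> \<open>\<open>c\<close> may be unbounded; the sets \<open>truncation i\<close> make both measures sigma-finite.\<close>
  have "\<mu>\<^sub>1 = \<mu>\<^sub>2"
  proof (rule measure_eqI_generator_eq[OF Int_stable_pair_measure_generator[of F E]])
    show "{a \<times> b |a b. a \<in> sets F \<and> b \<in> sets E} \<subseteq> Pow (space F \<times> space E)"
      by (auto dest: sets.sets_into_space)
    show "sets \<mu>\<^sub>1 = sigma_sets (space F \<times> space E) {a \<times> b |a b. a \<in> sets F \<and> b \<in> sets E}"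
      and "sets \<mu>\<^sub>2 = sigma_sets (space F \<times> space E) {a \<times> b |a b. a \<in> sets F \<and> b \<in> sets E}"
      by (simp_all add: sets_\<mu>\<^sub>1 sets_\<mu>\<^sub>2 sets_pair_measure)
    show "emeasure \<mu>\<^sub>1 X = emeasure \<mu>\<^sub>2 X" if "X \<in> {a \<times> b |a b. a \<in> sets F \<and> b \<in> sets E}" for X
      using that rectangle by auto
    show "range truncation \<subseteq> {a \<times> b |a b. a \<in> sets F \<and> b \<in> sets E}"
      unfolding truncation_def using sets_truncation by blast
    show "(\<Union>i. truncation i) = space F \<times> space E"
      using c_finite ennreal_Ex_less_of_nat
      by (fastforce simp: truncation_def space_F dest: less_imp_le)
    show "emeasure \<mu>\<^sub>1 (truncation i) \<noteq> \<infinity>" for i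
    proof -
      have "emeasure \<mu>\<^sub>1 (truncation i)
          = (\<integral>\<^sup>+\<omega>. indicator {\<omega> \<in> space F. c \<omega> \<le> of_nat i} \<omega> * (c \<omega> * emeasure (K \<omega>) (space E)) \<partial>M)"
        unfolding truncation_def rectangle[OF sets_truncation sets.top]
        by (rule emeasure_\<mu>\<^sub>2[OF sets_truncation sets.top])
      also have "\<dots> \<le> (\<integral>\<^sup>+\<omega>. of_nat i \<partial>M)"
      proof (rule nn_integral_mono)
        fix \<omega> assume "\<omega> \<in> space M"
        then have "\<omega> \<in> space F"
          by (simp add: space_F)
        then have "subprob_space (K \<omega>)"
          by (rule subprob_space_kernel[OF K])
        then have le_1: "emeasure (K \<omega>) (space E) \<le> 1"
          by (rule subprob_space.subprob_emeasure_le_1)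
        show "indicator {\<omega> \<in> space F. c \<omega> \<le> of_nat i} \<omega> * (c \<omega> * emeasure (K \<omega>) (space E)) \<le> of_nat i"
        proof (cases "c \<omega> \<le> of_nat i")
          case True
          have "c \<omega> * emeasure (K \<omega>) (space E) \<le> of_nat i * 1"
            using True le_1 by (rule mult_mono) auto
          then show ?thesis
            using True \<open>\<omega> \<in> space M\<close> by (simp add: space_F)
        qed (simp add: indicator_def)
      qed
      also have "\<dots> < \<infinity>"
        by (simp add: emeasure_space_1 of_nat_less_top)
      finally show ?thesis by simp
    qed
  qed
  then show ?thesis
    using integral_\<mu>\<^sub>1[OF \<Phi>] integral_\<mu>\<^sub>2[OF \<Phi>] by simp
qed

section \<open>Histories and the bounds of AS*\<close>

definition history :: "(nat \<Rightarrow> 'a \<Rightarrow> real) \<Rightarrow> nat \<Rightarrow> 'a \<Rightarrow> nat \<Rightarrow> real" where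
  "history X n \<omega> = (\<lambda>k. if 1 \<le> k \<and> k < n then X k \<omega> else 0)"

definition history_space :: "(nat \<Rightarrow> real) measure" where
  "history_space = Pi\<^sub>M UNIV (\<lambda>_. borel)"

lemma measurable_history:
  assumes "\<And>k. 1 \<le> k \<Longrightarrow> k < n \<Longrightarrow> X k \<in> borel_measurable N"
  shows "history X n \<in> measurable N history_space"
  unfolding history_def history_space_def
proof (rule measurable_PiM_single')
  show "(\<lambda>\<omega>. if 1 \<le> k \<and> k < n then X k \<omega> else 0) \<in> borel_measurable N" for k
    using assms by (cases "1 \<le> k \<and> k < n") auto
qed (auto simp: space_PiM)

lemma measurable_history_coordinate[measurable]: "(\<lambda>h. h k) \<in> borel_measurable history_space"
  unfolding history_space_def by measurable

lemma measurable_history_upd[measurable]: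
  "(\<lambda>(h, y). h(n := y)) \<in> measurable (history_space \<Otimes>\<^sub>M borel) history_space"
  using measurable_add_dim[of n UNIV "\<lambda>_. borel :: real measure"] by (simp add: history_space_def)

lemma history_Suc: "1 \<le> n \<Longrightarrow> history X (Suc n) \<omega> = (history X n \<omega>)(n := X n \<omega>)"
  by (auto simp: history_def fun_eq_iff)

lemma AS_lo_eq_Max:
  "AS_lo X xs n \<omega> = Max ((\<lambda>k. if 1 \<le> k \<and> k < n \<and> X k \<omega> \<le> xs then X k \<omega> else 0) ` {..n})"
proof -
  have "{0} \<union> {X k \<omega> | k. 1 \<le> k \<and> k < n \<and> X k \<omega> \<le> xs}
      = (\<lambda>k. if 1 \<le> k \<and> k < n \<and> X k \<omega> \<le> xs then X k \<omega> else 0) ` {..n}"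
    by (force simp: image_iff)
  then show ?thesis by (simp add: AS_lo_def)
qed

lemma AS_hi_eq_Min:
  "AS_hi X xs n \<omega> = Min ((\<lambda>k. if 1 \<le> k \<and> k < n \<and> xs \<le> X k \<omega> then X k \<omega> else 1) ` {..n})"
proof -
  have "{1} \<union> {X k \<omega> | k. 1 \<le> k \<and> k < n \<and> xs \<le> X k \<omega>}
      = (\<lambda>k. if 1 \<le> k \<and> k < n \<and> xs \<le> X k \<omega> then X k \<omega> else 1) ` {..n}"
    by (force simp: image_iff)
  then show ?thesis by (simp add: AS_hi_def)
qed

lemma measurable_AS_lo:
  assumes "\<And>k. 1 \<le> k \<Longrightarrow> k < n \<Longrightarrow> X k \<in> borel_measurable N"
  shows "AS_lo X xs n \<in> borel_measurable N"
proof -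
  have "(\<lambda>\<omega>. Max ((\<lambda>k. if 1 \<le> k \<and> k < n \<and> X k \<omega> \<le> xs then X k \<omega> else 0) ` {..n})) \<in> borel_measurable N"
  proof (rule borel_measurable_Max)
    show "(\<lambda>\<omega>. if 1 \<le> k \<and> k < n \<and> X k \<omega> \<le> xs then X k \<omega> else 0) \<in> borel_measurable N" for k
      using assms[of k] by (cases "1 \<le> k \<and> k < n") auto
  qed simp
  then show ?thesis
    by (simp add: AS_lo_eq_Max[abs_def])
qed

lemma measurable_AS_hi:
  assumes "\<And>k. 1 \<le> k \<Longrightarrow> k < n \<Longrightarrow> X k \<in> borel_measurable N"
  shows "AS_hi X xs n \<in> borel_measurable N"
proof -
  have "(\<lambda>\<omega>. Min ((\<lambda>k. if 1 \<le> k \<and> k < n \<and> xs \<le> X k \<omega> then X k \<omega> else 1) ` {..n})) \<in> borel_measurable N"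
  proof (rule borel_measurable_Min)
    show "(\<lambda>\<omega>. if 1 \<le> k \<and> k < n \<and> xs \<le> X k \<omega> then X k \<omega> else 1) \<in> borel_measurable N" for k
      using assms[of k] by (cases "1 \<le> k \<and> k < n") auto
  qed simp
  then show ?thesis
    by (simp add: AS_hi_eq_Min[abs_def])
qed

lemma AS_lo_bounds:
  assumes "0 \<le> xs"
  shows "0 \<le> AS_lo X xs n \<omega>" and "AS_lo X xs n \<omega> \<le> xs"
proof -
  let ?f = "\<lambda>k. if 1 \<le> k \<and> k < n \<and> X k \<omega> \<le> xs then X k \<omega> else 0"
  have fin: "finite (?f ` {..n})" and zero: "0 \<in> ?f ` {..n}"
    by (auto intro: image_eqI[of _ _ 0])
  show "0 \<le> AS_lo X xs n \<omega>"
    unfolding AS_lo_eq_Max using fin zero by (rule Max_ge)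
  show "AS_lo X xs n \<omega> \<le> xs"
    unfolding AS_lo_eq_Max using zero assms by (intro Max.boundedI[OF fin]) auto
qed

lemma AS_hi_bounds:
  assumes "xs \<le> 1"
  shows "xs \<le> AS_hi X xs n \<omega>" and "AS_hi X xs n \<omega> \<le> 1"
proof -
  let ?f = "\<lambda>k. if 1 \<le> k \<and> k < n \<and> xs \<le> X k \<omega> then X k \<omega> else 1"
  have fin: "finite (?f ` {..n})" and one: "1 \<in> ?f ` {..n}"
    by (auto intro: image_eqI[of _ _ 0])
  show "AS_hi X xs n \<omega> \<le> 1"
    unfolding AS_hi_eq_Min using fin one by (rule Min_le)
  show "xs \<le> AS_hi X xs n \<omega>"
    unfolding AS_hi_eq_Min using one assms by (intro Min.boundedI[OF fin]) auto
qed

lemma AS_lo_history: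
  "n \<le> m \<Longrightarrow> AS_lo (\<lambda>k h. h k) xs n (history X m \<omega>) = AS_lo X xs n \<omega>"
  unfolding AS_lo_eq_Max by (intro arg_cong[where f = Max] image_cong) (auto simp: history_def)

lemma AS_hi_history:
  "n \<le> m \<Longrightarrow> AS_hi (\<lambda>k h. h k) xs n (history X m \<omega>) = AS_hi X xs n \<omega>"
  unfolding AS_hi_eq_Min by (intro arg_cong[where f = Min] image_cong) (auto simp: history_def)

section \<open>The AS* process\<close>

locale AS_star_process =
  fixes M :: "'a measure" and xs :: real and G X :: "nat \<Rightarrow> 'a \<Rightarrow> real"
  assumes prob_M: "prob_space M" and xs_nonneg: "0 \<le> xs" and xs_le_1: "xs \<le> 1"
    and AS_star: "is_AS_star M xs G X"
begin

definition P_B :: "nat \<Rightarrow> 'a \<Rightarrow> real" where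
  "P_B n \<omega> = measure P_unif (AS_B X xs n \<omega>)"

definition unif_B :: "nat \<Rightarrow> 'a \<Rightarrow> real measure" where
  "unif_B n \<omega> = uniform_measure P_unif (AS_B X xs n \<omega>)"

definition exp_neg_G :: "nat \<Rightarrow> 'a \<Rightarrow> ennreal" where
  "exp_neg_G n \<omega> = ennreal (exp (- G n \<omega>))"

definition sum_inv_P_B :: "nat \<Rightarrow> 'a \<Rightarrow> ennreal" where
  "sum_inv_P_B N \<omega> = ennreal (\<Sum>n = 1..N. 1 / P_B n \<omega>)"

(* The exponential moment of TG(log P(B_n), G_(n-1)), see nn_integral_exp_neg_TG. *)
definition cond_mean_exp_neg_G :: "nat \<Rightarrow> 'a \<Rightarrow> ennreal" where
  "cond_mean_exp_neg_G n \<omega> = ennreal (1 / P_B n \<omega>) + (if n \<le> 1 then 0 else exp_neg_G (n - 1) \<omega>)"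

lemma sets_unif_B[measurable_cong]: "sets (unif_B n \<omega>) = sets borel"
  by (simp add: unif_B_def sets_P_unif)

lemma measurable_G[measurable]: "1 \<le> n \<Longrightarrow> G n \<in> borel_measurable M"
  and measurable_X[measurable]: "1 \<le> n \<Longrightarrow> X n \<in> borel_measurable M"
  using AS_star by (auto simp: is_AS_star_def)

lemma sigma_finite_subalgebra_past: "sigma_finite_subalgebra M (AS_past M G X n)"
  unfolding AS_past_def
  by (rule sigma_finite_subalgebra_gen_sigma[OF prob_space.axioms(1)[OF prob_M]]) auto

lemma subalgebra_past: "subalgebra M (AS_past M G X n)"
  using sigma_finite_subalgebra_past sigma_finite_subalgebra.subalg by blast

lemma measurable_past_imp_measurable: "f \<in> measurable (AS_past M G X n) N \<Longrightarrow> f \<in> measurable M N"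
  by (rule measurable_from_subalg[OF subalgebra_past])

lemma G_past: "1 \<le> k \<Longrightarrow> k < n \<Longrightarrow> G k \<in> borel_measurable (AS_past M G X n)"
  and X_past: "1 \<le> k \<Longrightarrow> k < n \<Longrightarrow> X k \<in> borel_measurable (AS_past M G X n)"
  unfolding AS_past_def by (auto intro: measurable_gen_sigma)

lemma history_past: "history X n \<in> measurable (AS_past M G X n) history_space"
  by (rule measurable_history) (rule X_past)

lemma AS_lo_past: "n \<le> m \<Longrightarrow> AS_lo X xs n \<in> borel_measurable (AS_past M G X m)"
  and AS_hi_past: "n \<le> m \<Longrightarrow> AS_hi X xs n \<in> borel_measurable (AS_past M G X m)"
  by (auto intro!: measurable_AS_lo measurable_AS_hi X_past)

lemma P_B_eq: "P_B n \<omega> = AS_hi X xs n \<omega> - AS_lo X xs n \<omega>"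
  unfolding P_B_def AS_B_def
  using AS_lo_bounds[OF xs_nonneg, of X n \<omega>] AS_hi_bounds[OF xs_le_1, of X n \<omega>]
  by (intro measure_P_unif_Icc) linarith+

lemma P_B_nonneg: "0 \<le> P_B n \<omega>"
  using AS_lo_bounds(2)[OF xs_nonneg, of X n \<omega>] AS_hi_bounds(1)[OF xs_le_1, of X n \<omega>]
  by (simp add: P_B_eq)

lemma P_B_past: "n \<le> m \<Longrightarrow> P_B n \<in> borel_measurable (AS_past M G X m)"
proof -
  assume "n \<le> m"
  note [measurable] = AS_lo_past[OF this] AS_hi_past[OF this]
  have "P_B n = (\<lambda>\<omega>. AS_hi X xs n \<omega> - AS_lo X xs n \<omega>)"
    by (simp add: fun_eq_iff P_B_eq)
  then show ?thesis by simp
qed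

lemma unif_B_past: "unif_B n \<in> measurable (AS_past M G X n) (subprob_algebra borel)"
  unfolding unif_B_def AS_B_def
  by (intro measurable_uniform_P_unif_Icc AS_lo_past AS_hi_past) simp_all

lemma exp_neg_G_measurable[measurable]: "1 \<le> n \<Longrightarrow> exp_neg_G n \<in> borel_measurable M"
  unfolding exp_neg_G_def[abs_def] by measurable

lemma exp_neg_G_past: "1 \<le> k \<Longrightarrow> k < n \<Longrightarrow> exp_neg_G k \<in> borel_measurable (AS_past M G X n)"
  using G_past unfolding exp_neg_G_def[abs_def] by measurable

lemma sum_inv_P_B_past:
  assumes "N \<le> m"
  shows "sum_inv_P_B N \<in> borel_measurable (AS_past M G X m)"
proof -
  have "(\<lambda>\<omega>. \<Sum>n = 1..N. 1 / P_B n \<omega>) \<in> borel_measurable (AS_past M G X m)"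
    using assms by (intro borel_measurable_sum borel_measurable_divide borel_measurable_const P_B_past) auto
  then show ?thesis
    unfolding sum_inv_P_B_def[abs_def] by measurable
qed

lemma cond_mean_exp_neg_G_past: "cond_mean_exp_neg_G n \<in> borel_measurable (AS_past M G X n)"
proof -
  have [measurable]: "P_B n \<in> borel_measurable (AS_past M G X n)"
    by (rule P_B_past) simp
  show ?thesis
  proof (cases "n \<le> 1")
    case True
    then have eq: "cond_mean_exp_neg_G n = (\<lambda>\<omega>. ennreal (1 / P_B n \<omega>))"
      by (simp add: fun_eq_iff cond_mean_exp_neg_G_def)
    show ?thesis unfolding eq by measurable
  next
    case False
    then have [measurable]: "exp_neg_G (n - 1) \<in> borel_measurable (AS_past M G X n)"
      by (intro exp_neg_G_past) auto
    from False have eq: "cond_mean_exp_neg_G n = (\<lambda>\<omega>. ennreal (1 / P_B n \<omega>) + exp_neg_G (n - 1) \<omega>)"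
      by (simp add: fun_eq_iff cond_mean_exp_neg_G_def)
    show ?thesis unfolding eq by measurable
  qed
qed

lemma cond_exp_AS_star_pair:
  assumes n: "1 \<le> n" and h: "h \<in> borel_measurable (borel :: (real \<times> real) measure)"
  shows "AE \<omega> in M. nn_cond_exp M (AS_past M G X n) (\<lambda>\<omega>. h (G n \<omega>, X n \<omega>)) \<omega>
    = (\<integral>\<^sup>+z. h z \<partial>(TG (ln (P_B n \<omega>)) (AS_prevG G n \<omega>) \<Otimes>\<^sub>M unif_B n \<omega>))"
proof -
  from AS_star have "\<forall>n\<ge>1. \<forall>h \<in> borel_measurable borel. AE \<omega> in M.
      nn_cond_exp M (AS_past M G X n) (\<lambda>\<omega>. h (G n \<omega>, X n \<omega>)) \<omega>
        = (\<integral>\<^sup>+z. h z \<partial>(TG (ln (P_B n \<omega>)) (AS_prevG G n \<omega>) \<Otimes>\<^sub>M unif_B n \<omega>))"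
    unfolding is_AS_star_def P_B_def unif_B_def by (rule conjunct2)
  with n h show ?thesis by simp
qed

lemma cond_exp_AS_star:
  fixes f k :: "real \<Rightarrow> ennreal"
  assumes n: "1 \<le> n" and [measurable]: "f \<in> borel_measurable borel" "k \<in> borel_measurable borel"
  shows "AE \<omega> in M. nn_cond_exp M (AS_past M G X n) (\<lambda>\<omega>. f (G n \<omega>) * k (X n \<omega>)) \<omega>
    = (\<integral>\<^sup>+g. f g \<partial>TG (ln (P_B n \<omega>)) (AS_prevG G n \<omega>)) * (\<integral>\<^sup>+y. k y \<partial>unif_B n \<omega>)"
proof -
  have "(\<lambda>z. f (fst z) * k (snd z)) \<in> borel_measurable (borel :: (real \<times> real) measure)"
    unfolding borel_prod[symmetric] by measurable
  from cond_exp_AS_star_pair[OF n this] show ?thesis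
  proof (rule eventually_mono)
    fix \<omega>
    have "sigma_finite_measure (unif_B n \<omega>)"
      unfolding unif_B_def AS_B_def
      by (intro subprob_space_imp_sigma_finite subprob_space_uniform_P_unif) simp
    then have "(\<integral>\<^sup>+z. f (fst z) * k (snd z) \<partial>(TG (ln (P_B n \<omega>)) (AS_prevG G n \<omega>) \<Otimes>\<^sub>M unif_B n \<omega>))
        = (\<integral>\<^sup>+g. f g \<partial>TG (ln (P_B n \<omega>)) (AS_prevG G n \<omega>)) * (\<integral>\<^sup>+y. k y \<partial>unif_B n \<omega>)"
      by (rule nn_integral_pair_measure_mult)
         (simp_all add: measurable_cong_sets[OF sets_TG refl] measurable_cong_sets[OF sets_unif_B refl])
    then show "nn_cond_exp M (AS_past M G X n) (\<lambda>\<omega>. f (fst (G n \<omega>, X n \<omega>)) * k (snd (G n \<omega>, X n \<omega>))) \<omega>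
        = (\<integral>\<^sup>+z. f (fst z) * k (snd z) \<partial>(TG (ln (P_B n \<omega>)) (AS_prevG G n \<omega>) \<Otimes>\<^sub>M unif_B n \<omega>)) \<Longrightarrow>
      nn_cond_exp M (AS_past M G X n) (\<lambda>\<omega>. f (G n \<omega>) * k (X n \<omega>)) \<omega>
        = (\<integral>\<^sup>+g. f g \<partial>TG (ln (P_B n \<omega>)) (AS_prevG G n \<omega>)) * (\<integral>\<^sup>+y. k y \<partial>unif_B n \<omega>)"
      by simp
  qed
qed

lemma AS_prevG_not_MInf: "AS_prevG G n \<omega> \<noteq> - \<infinity>"
  by (simp add: AS_prevG_def)

lemma emeasure_unif_B_space: "emeasure (unif_B n \<omega>) UNIV = (if P_B n \<omega> = 0 then 0 else 1)"
proof -
  interpret P: prob_space P_unif by (rule prob_space_P_unif)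
  have "emeasure P_unif (AS_B X xs n \<omega>) = ennreal (P_B n \<omega>)"
    by (simp add: P_B_def P.emeasure_eq_measure)
  then show ?thesis
    using P_B_nonneg[of n \<omega>] unfolding unif_B_def
    by (subst emeasure_uniform_measure) (auto simp: AS_B_def)
qed

(* The conditional law of X_n has total mass one, which forces P(B_n) > 0 almost surely. *)
lemma P_B_pos: "1 \<le> n \<Longrightarrow> AE \<omega> in M. 0 < P_B n \<omega>"
proof -
  assume n: "1 \<le> n"
  interpret sigma_finite_subalgebra M "AS_past M G X n" by (rule sigma_finite_subalgebra_past)
  have "AE \<omega> in M. 1 = nn_cond_exp M (AS_past M G X n) (\<lambda>_. 1) \<omega>"
    by (rule nn_cond_exp_F_meas) simp
  moreover have "AE \<omega> in M. nn_cond_exp M (AS_past M G X n) (\<lambda>\<omega>. 1 * 1) \<omega>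
      = (\<integral>\<^sup>+g. 1 \<partial>TG (ln (P_B n \<omega>)) (AS_prevG G n \<omega>)) * (\<integral>\<^sup>+y. 1 \<partial>unif_B n \<omega>)"
    using cond_exp_AS_star[OF n, of "\<lambda>_. 1" "\<lambda>_. 1"] by simp
  ultimately show ?thesis
  proof eventually_elim
    case (elim \<omega>)
    then have "emeasure (unif_B n \<omega>) UNIV = 1"
      by (simp add: prob_space.emeasure_space_1[OF prob_space_TG[OF AS_prevG_not_MInf]] unif_B_def)
    then show "0 < P_B n \<omega>"
      using P_B_nonneg[of n \<omega>] by (auto simp: emeasure_unif_B_space split: if_splits)
  qed
qed

lemma nn_integral_exp_neg_TG_past:
  assumes "0 < P_B n \<omega>"
  shows "(\<integral>\<^sup>+g. ennreal (exp (- g)) \<partial>TG (ln (P_B n \<omega>)) (AS_prevG G n \<omega>)) = cond_mean_exp_neg_G n \<omega>"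
proof -
  have "(\<integral>\<^sup>+g. ennreal (exp (- g)) \<partial>TG (ln (P_B n \<omega>)) (AS_prevG G n \<omega>))
      = ennreal (exp (- ln (P_B n \<omega>))
          + (if AS_prevG G n \<omega> = \<infinity> then 0 else exp (- real_of_ereal (AS_prevG G n \<omega>))))"
    by (rule nn_integral_exp_neg_TG[OF AS_prevG_not_MInf])
  also have "\<dots> = cond_mean_exp_neg_G n \<omega>"
    using assms by (simp add: AS_prevG_def cond_mean_exp_neg_G_def exp_neg_G_def exp_minus inverse_eq_divide ennreal_plus)
  finally show ?thesis .
qed

lemma cond_exp_exp_neg_G_indicator:
  assumes n: "1 \<le> n" and [measurable]: "S \<in> sets borel"
  shows "AE \<omega> in M. nn_cond_exp M (AS_past M G X n) (\<lambda>\<omega>. exp_neg_G n \<omega> * indicator S (X n \<omega>)) \<omega>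
    = cond_mean_exp_neg_G n \<omega> * emeasure (unif_B n \<omega>) S"
proof -
  have "AE \<omega> in M. nn_cond_exp M (AS_past M G X n) (\<lambda>\<omega>. ennreal (exp (- G n \<omega>)) * indicator S (X n \<omega>)) \<omega>
      = (\<integral>\<^sup>+g. ennreal (exp (- g)) \<partial>TG (ln (P_B n \<omega>)) (AS_prevG G n \<omega>)) * (\<integral>\<^sup>+y. indicator S y \<partial>unif_B n \<omega>)"
    by (rule cond_exp_AS_star[OF n]) measurable
  with P_B_pos[OF n] show ?thesis
    by eventually_elim (simp add: nn_integral_exp_neg_TG_past exp_neg_G_def)
qed

lemma cond_exp_indicator:
  assumes n: "1 \<le> n" and [measurable]: "S \<in> sets borel"
  shows "AE \<omega> in M. nn_cond_exp M (AS_past M G X n) (\<lambda>\<omega>. indicator S (X n \<omega>)) \<omega> = emeasure (unif_B n \<omega>) S"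
proof -
  have "AE \<omega> in M. nn_cond_exp M (AS_past M G X n) (\<lambda>\<omega>. 1 * indicator S (X n \<omega>)) \<omega>
      = (\<integral>\<^sup>+g. 1 \<partial>TG (ln (P_B n \<omega>)) (AS_prevG G n \<omega>)) * (\<integral>\<^sup>+y. indicator S y \<partial>unif_B n \<omega>)"
    by (rule cond_exp_AS_star[OF n]) measurable
  then show ?thesis
    by eventually_elim (simp add: prob_space.emeasure_space_1[OF prob_space_TG[OF AS_prevG_not_MInf]])
qed

lemma nn_integral_exp_neg_G_past:
  assumes n: "1 \<le> n" and Z[measurable]: "Z \<in> borel_measurable (AS_past M G X n)"
  shows "(\<integral>\<^sup>+\<omega>. exp_neg_G n \<omega> * Z \<omega> \<partial>M) = (\<integral>\<^sup>+\<omega>. cond_mean_exp_neg_G n \<omega> * Z \<omega> \<partial>M)"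
proof -
  interpret sigma_finite_subalgebra M "AS_past M G X n" by (rule sigma_finite_subalgebra_past)
  have "(\<integral>\<^sup>+\<omega>. exp_neg_G n \<omega> * Z \<omega> \<partial>M)
      = (\<integral>\<^sup>+\<omega>. Z \<omega> * nn_cond_exp M (AS_past M G X n) (\<lambda>\<omega>. exp_neg_G n \<omega> * indicator UNIV (X n \<omega>)) \<omega> \<partial>M)"
    using n by (subst nn_cond_exp_intg) (simp_all add: mult.commute)
  also have "\<dots> = (\<integral>\<^sup>+\<omega>. cond_mean_exp_neg_G n \<omega> * Z \<omega> \<partial>M)"
    using cond_exp_exp_neg_G_indicator[OF n, of UNIV] P_B_pos[OF n]
    by (intro nn_integral_cong_AE) (auto simp: emeasure_unif_B_space mult.commute)
  finally show ?thesis .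
qed

lemma cond_mean_exp_neg_G_finite: "cond_mean_exp_neg_G n \<omega> < \<infinity>"
  by (simp add: cond_mean_exp_neg_G_def exp_neg_G_def)

(* Since G_N and X_N are conditionally independent given the past, exp_neg_G N may be
   replaced by its conditional mean both before and after X_N is integrated out. *)
lemma exp_neg_G_history_Suc:
  assumes N: "1 \<le> N"
    and IH: "\<And>\<Psi>. \<Psi> \<in> borel_measurable history_space \<Longrightarrow>
      (\<integral>\<^sup>+\<omega>. exp_neg_G N \<omega> * \<Psi> (history X N \<omega>) \<partial>M) = (\<integral>\<^sup>+\<omega>. sum_inv_P_B N \<omega> * \<Psi> (history X N \<omega>) \<partial>M)"
    and \<Psi>[measurable]: "\<Psi> \<in> borel_measurable history_space"
  shows "(\<integral>\<^sup>+\<omega>. exp_neg_G N \<omega> * \<Psi> (history X (Suc N) \<omega>) \<partial>M)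
    = (\<integral>\<^sup>+\<omega>. sum_inv_P_B N \<omega> * \<Psi> (history X (Suc N) \<omega>) \<partial>M)"
proof -
  define K where "K h = uniform_measure P_unif {AS_lo (\<lambda>k h. h k) xs N h..AS_hi (\<lambda>k h. h k) xs N h}" for h
  have K: "K \<in> measurable history_space (subprob_algebra borel)"
    unfolding K_def by (intro measurable_uniform_P_unif_Icc measurable_AS_lo measurable_AS_hi) simp_all
  have unif_B_eq: "unif_B N \<omega> = K (history X N \<omega>)" for \<omega>
    by (simp add: unif_B_def AS_B_def K_def AS_lo_history AS_hi_history)
  define \<Psi>' where "\<Psi>' h = (\<integral>\<^sup>+y. \<Psi> (h(N := y)) \<partial>K h)" for h
  have upd: "(\<lambda>z. (fst z)(N := snd z)) \<in> measurable (history_space \<Otimes>\<^sub>M borel) history_space"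
    using measurable_history_upd[of N] by (simp add: split_beta')
  have \<Psi>'[measurable]: "\<Psi>' \<in> borel_measurable history_space"
    unfolding \<Psi>'_def using measurable_compose[OF upd \<Psi>]
    by (intro nn_integral_measurable_subprob_algebra2[OF _ K]) (simp add: split_beta')
  note [measurable] = history_past[of N] sigma_finite_subalgebra.subalg[OF sigma_finite_subalgebra_past]
  define \<Phi> where "\<Phi> z = \<Psi> ((history X N (fst z))(N := snd z))" for z
  have \<Phi>[measurable]: "\<Phi> \<in> borel_measurable (AS_past M G X N \<Otimes>\<^sub>M borel)"
  proof -
    have "(\<lambda>z. (history X N (fst z), snd z)) \<in> measurable (AS_past M G X N \<Otimes>\<^sub>M borel) (history_space \<Otimes>\<^sub>M borel)"
      by measurable
    from measurable_compose[OF measurable_compose[OF this upd] \<Psi>] show ?thesis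
      by (simp add: \<Phi>_def[abs_def])
  qed
  have \<Phi>_X: "\<Phi> (\<omega>, X N \<omega>) = \<Psi> (history X (Suc N) \<omega>)" for \<omega>
    using N by (simp add: \<Phi>_def history_Suc)
  have \<Phi>_integral: "(\<integral>\<^sup>+y. \<Phi> (\<omega>, y) \<partial>unif_B N \<omega>) = \<Psi>' (history X N \<omega>)" for \<omega>
    by (simp add: \<Phi>_def \<Psi>'_def unif_B_eq)
  have kernel_cond: "(\<integral>\<^sup>+\<omega>. V \<omega> * \<Theta> (\<omega>, X N \<omega>) \<partial>M) = (\<integral>\<^sup>+\<omega>. c \<omega> * (\<integral>\<^sup>+y. \<Theta> (\<omega>, y) \<partial>unif_B N \<omega>) \<partial>M)"
    if "V \<in> borel_measurable M" "c \<in> borel_measurable (AS_past M G X N)" "\<And>\<omega>. c \<omega> < \<infinity>"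
      "\<And>S. S \<in> sets borel \<Longrightarrow> AE \<omega> in M. nn_cond_exp M (AS_past M G X N) (\<lambda>\<omega>. V \<omega> * indicator S (X N \<omega>)) \<omega>
        = c \<omega> * emeasure (unif_B N \<omega>) S"
      "\<Theta> \<in> borel_measurable (AS_past M G X N \<Otimes>\<^sub>M borel)" for V c \<Theta>
    using that by (intro nn_integral_cond_kernel[OF sigma_finite_subalgebra_past prob_M measurable_X[OF N]
        _ _ _ unif_B_past]) auto
  have "(\<integral>\<^sup>+\<omega>. exp_neg_G N \<omega> * \<Psi> (history X (Suc N) \<omega>) \<partial>M) = (\<integral>\<^sup>+\<omega>. exp_neg_G N \<omega> * \<Phi> (\<omega>, X N \<omega>) \<partial>M)"
    by (simp add: \<Phi>_X)
  also have "\<dots> = (\<integral>\<^sup>+\<omega>. cond_mean_exp_neg_G N \<omega> * (\<integral>\<^sup>+y. \<Phi> (\<omega>, y) \<partial>unif_B N \<omega>) \<partial>M)"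
    by (rule kernel_cond[OF exp_neg_G_measurable[OF N] cond_mean_exp_neg_G_past cond_mean_exp_neg_G_finite
          cond_exp_exp_neg_G_indicator[OF N] \<Phi>])
  also have "\<dots> = (\<integral>\<^sup>+\<omega>. cond_mean_exp_neg_G N \<omega> * \<Psi>' (history X N \<omega>) \<partial>M)"
    by (simp add: \<Phi>_integral)
  also have "\<dots> = (\<integral>\<^sup>+\<omega>. exp_neg_G N \<omega> * \<Psi>' (history X N \<omega>) \<partial>M)"
    using N by (intro nn_integral_exp_neg_G_past[symmetric]) measurable
  also have "\<dots> = (\<integral>\<^sup>+\<omega>. sum_inv_P_B N \<omega> * \<Psi>' (history X N \<omega>) \<partial>M)"
    by (rule IH) measurable
  also have "\<dots> = (\<integral>\<^sup>+\<omega>. sum_inv_P_B N \<omega> * \<Phi> (\<omega>, X N \<omega>) \<partial>M)"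
  proof -
    have [measurable]: "sum_inv_P_B N \<in> borel_measurable (AS_past M G X N)"
      by (rule sum_inv_P_B_past) simp
    define \<Phi>' where "\<Phi>' z = sum_inv_P_B N (fst z) * \<Phi> z" for z
    have [measurable]: "\<Phi>' \<in> borel_measurable (AS_past M G X N \<Otimes>\<^sub>M borel)"
      unfolding \<Phi>'_def[abs_def] by measurable
    have \<Phi>_section: "(\<lambda>y. \<Phi> (\<omega>, y)) \<in> borel_measurable (unif_B N \<omega>)" for \<omega>
    proof -
      have "(\<lambda>y. (history X N \<omega>)(N := y)) \<in> measurable borel history_space"
        using measurable_compose[OF measurable_Pair1'[of "history X N \<omega>" history_space borel] upd]
        by (simp add: history_space_def space_PiM)
      from measurable_compose[OF this \<Psi>] show ?thesis
        by (simp add: \<Phi>_def measurable_cong_sets[OF sets_unif_B refl])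
    qed
    have "(\<integral>\<^sup>+\<omega>. sum_inv_P_B N \<omega> * \<Phi> (\<omega>, X N \<omega>) \<partial>M) = (\<integral>\<^sup>+\<omega>. 1 * \<Phi>' (\<omega>, X N \<omega>) \<partial>M)"
      by (simp add: \<Phi>'_def)
    also have "\<dots> = (\<integral>\<^sup>+\<omega>. 1 * (\<integral>\<^sup>+y. \<Phi>' (\<omega>, y) \<partial>unif_B N \<omega>) \<partial>M)"
      by (rule kernel_cond) (simp_all add: cond_exp_indicator[OF N])
    also have "\<dots> = (\<integral>\<^sup>+\<omega>. sum_inv_P_B N \<omega> * \<Psi>' (history X N \<omega>) \<partial>M)"
      by (simp add: \<Phi>'_def nn_integral_cmult[OF \<Phi>_section] \<Phi>_integral)
    finally show ?thesis ..
  qed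
  also have "\<dots> = (\<integral>\<^sup>+\<omega>. sum_inv_P_B N \<omega> * \<Psi> (history X (Suc N) \<omega>) \<partial>M)"
    by (simp add: \<Phi>_X)
  finally show ?thesis .
qed

lemma P_B_measurable[measurable]: "P_B n \<in> borel_measurable M"
  by (rule measurable_past_imp_measurable[OF P_B_past[OF order_refl]])

lemma history_measurable[measurable]: "history X n \<in> measurable M history_space"
  by (rule measurable_past_imp_measurable[OF history_past])

lemma sum_inv_P_B_measurable[measurable]: "sum_inv_P_B N \<in> borel_measurable M"
  by (rule measurable_past_imp_measurable[OF sum_inv_P_B_past[OF order_refl]])

lemma sum_inv_P_B_Suc: "sum_inv_P_B (Suc N) \<omega> = sum_inv_P_B N \<omega> + ennreal (1 / P_B (Suc N) \<omega>)"
proof -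
  have "0 \<le> (\<Sum>n = 1..N. 1 / P_B n \<omega>)"
    by (intro sum_nonneg) (simp add: P_B_nonneg)
  then show ?thesis
    using P_B_nonneg[of "Suc N" \<omega>] by (simp add: sum_inv_P_B_def sum.cl_ivl_Suc ennreal_plus)
qed

lemma nn_integral_exp_neg_G_history:
  assumes "1 \<le> N" and "\<Psi> \<in> borel_measurable history_space"
  shows "(\<integral>\<^sup>+\<omega>. exp_neg_G N \<omega> * \<Psi> (history X N \<omega>) \<partial>M)
    = (\<integral>\<^sup>+\<omega>. sum_inv_P_B N \<omega> * \<Psi> (history X N \<omega>) \<partial>M)"
  using assms
proof (induction N arbitrary: \<Psi>)
  case 0
  then show ?case by simp
next
  case (Suc N)
  note \<Psi>[measurable] = Suc.prems(2)
  have "(\<integral>\<^sup>+\<omega>. exp_neg_G (Suc N) \<omega> * \<Psi> (history X (Suc N) \<omega>) \<partial>M)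
      = (\<integral>\<^sup>+\<omega>. cond_mean_exp_neg_G (Suc N) \<omega> * \<Psi> (history X (Suc N) \<omega>) \<partial>M)"
    by (rule nn_integral_exp_neg_G_past[OF Suc.prems(1) measurable_compose[OF history_past \<Psi>]])
  also have "\<dots> = (\<integral>\<^sup>+\<omega>. sum_inv_P_B (Suc N) \<omega> * \<Psi> (history X (Suc N) \<omega>) \<partial>M)"
  proof (cases "N = 0")
    case True
    then show ?thesis
      by (simp add: cond_mean_exp_neg_G_def sum_inv_P_B_def)
  next
    case False
    then have N: "1 \<le> N" by simp
    have [measurable]: "exp_neg_G N \<in> borel_measurable M"
      using N by simp
    have "(\<integral>\<^sup>+\<omega>. cond_mean_exp_neg_G (Suc N) \<omega> * \<Psi> (history X (Suc N) \<omega>) \<partial>M)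
        = (\<integral>\<^sup>+\<omega>. ennreal (1 / P_B (Suc N) \<omega>) * \<Psi> (history X (Suc N) \<omega>) \<partial>M)
          + (\<integral>\<^sup>+\<omega>. exp_neg_G N \<omega> * \<Psi> (history X (Suc N) \<omega>) \<partial>M)"
      using N by (simp add: cond_mean_exp_neg_G_def distrib_right nn_integral_add)
    also have "(\<integral>\<^sup>+\<omega>. exp_neg_G N \<omega> * \<Psi> (history X (Suc N) \<omega>) \<partial>M)
        = (\<integral>\<^sup>+\<omega>. sum_inv_P_B N \<omega> * \<Psi> (history X (Suc N) \<omega>) \<partial>M)"
      by (rule exp_neg_G_history_Suc[OF N Suc.IH[OF N] \<Psi>])
    finally show ?thesis
      by (simp add: sum_inv_P_B_Suc distrib_right nn_integral_add add.commute)
  qed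
  finally show ?case .
qed

lemma cond_exp_exp_neg_G_bounds:
  assumes N: "1 \<le> N"
  shows "AE \<omega> in M. nn_cond_exp M (gen_sigma M (\<Union>n\<in>{1..N}. {AS_lo X xs n, AS_hi X xs n})) (exp_neg_G N) \<omega>
    = sum_inv_P_B N \<omega>"
proof -
  define B where "B = gen_sigma M (\<Union>n\<in>{1..N}. {AS_lo X xs n, AS_hi X xs n})"
  have bounds_B: "AS_lo X xs n \<in> borel_measurable B" "AS_hi X xs n \<in> borel_measurable B" if "n \<in> {1..N}" for n
    using that unfolding B_def by (auto intro!: measurable_gen_sigma)
  have history_space_M: "history X N \<in> space M \<rightarrow> space history_space"
    using measurable_space[OF history_measurable] by blast
  have bounds_history: "f \<in> borel_measurable (vimage_algebra (space M) (history X N) history_space)"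
    if "f \<in> (\<Union>n\<in>{1..N}. {AS_lo X xs n, AS_hi X xs n})" for f
  proof -
    from that obtain n where n: "n \<le> N" and "f = AS_lo X xs n \<or> f = AS_hi X xs n"
      by auto
    then have "f = (\<lambda>\<omega>. AS_lo (\<lambda>k h. h k) xs n (history X N \<omega>)) \<or> f = (\<lambda>\<omega>. AS_hi (\<lambda>k h. h k) xs n (history X N \<omega>))"
      by (auto simp: AS_lo_history AS_hi_history)
    moreover have "AS_lo (\<lambda>k h. h k) xs n \<in> borel_measurable history_space"
      and "AS_hi (\<lambda>k h. h k) xs n \<in> borel_measurable history_space"
      by (intro measurable_AS_lo measurable_AS_hi measurable_history_coordinate)+
    ultimately show ?thesis
      using measurable_compose[OF measurable_vimage_algebra1[OF history_space_M]] by auto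
  qed
  interpret sigma_finite_subalgebra M B
    unfolding B_def using bounds_B
    by (intro sigma_finite_subalgebra_gen_sigma[OF prob_space.axioms(1)[OF prob_M]])
       (auto intro: measurable_past_imp_measurable AS_lo_past AS_hi_past)
  have sum_inv_P_B_B: "sum_inv_P_B N \<in> borel_measurable B"
  proof -
    have "(\<lambda>\<omega>. \<Sum>n = 1..N. 1 / (AS_hi X xs n \<omega> - AS_lo X xs n \<omega>)) \<in> borel_measurable B"
      using bounds_B by (intro borel_measurable_sum borel_measurable_divide borel_measurable_const borel_measurable_diff) auto
    from measurable_compose[OF this measurable_ennreal] show ?thesis
      by (simp add: sum_inv_P_B_def[abs_def] P_B_eq)
  qed
  have "AE \<omega> in M. sum_inv_P_B N \<omega> = nn_cond_exp M B (exp_neg_G N) \<omega>"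
  proof (rule nn_cond_exp_charact)
    fix A assume "A \<in> sets B"
    moreover have "sets B \<subseteq> sets (vimage_algebra (space M) (history X N) history_space)"
      unfolding B_def by (rule sets_gen_sigma_subset) (simp, erule bounds_history)
    ultimately obtain T where T[measurable]: "T \<in> sets history_space" and A: "A = history X N -` T \<inter> space M"
      using sets_vimage_algebra2[OF history_space_M] by auto
    have "(\<integral>\<^sup>+\<omega>\<in>A. exp_neg_G N \<omega> \<partial>M) = (\<integral>\<^sup>+\<omega>. exp_neg_G N \<omega> * indicator T (history X N \<omega>) \<partial>M)"
      by (intro nn_integral_cong) (simp add: A indicator_def)
    also have "\<dots> = (\<integral>\<^sup>+\<omega>. sum_inv_P_B N \<omega> * indicator T (history X N \<omega>) \<partial>M)"
      by (rule nn_integral_exp_neg_G_history[OF N]) simp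
    also have "\<dots> = (\<integral>\<^sup>+\<omega>\<in>A. sum_inv_P_B N \<omega> \<partial>M)"
      by (intro nn_integral_cong) (simp add: A indicator_def)
    finally show "(\<integral>\<^sup>+\<omega>\<in>A. exp_neg_G N \<omega> \<partial>M) = (\<integral>\<^sup>+\<omega>\<in>A. sum_inv_P_B N \<omega> \<partial>M)" .
  qed (use N sum_inv_P_B_B in simp_all)
  then show ?thesis
    unfolding B_def by eventually_elim simp
qed

end

theorem mainTheorem7:
  fixes M :: "'a measure" and r :: "real \<Rightarrow> real" and xstar rmax :: real
    and G X :: "nat \<Rightarrow> 'a \<Rightarrow> real" and N :: nat
  assumes "prob_space M"
    and "r \<in> borel_measurable borel"
    and "\<forall>x\<in>{0..1}. 0 \<le> r x"
    and "prob_space (density P_unif r)"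
    and "xstar \<in> {0..1}"
    and "\<forall>x y. 0 \<le> x \<and> x \<le> y \<and> y \<le> xstar \<longrightarrow> r x \<le> r y"
    and "\<forall>x y. xstar \<le> x \<and> x \<le> y \<and> y \<le> 1 \<longrightarrow> r y \<le> r x"
    and "bdd_above (r ` {0..1})"
    and "rmax = Sup (r ` {0..1})"
    and "r xstar = rmax"
    and "is_AS_star M xstar G X"
    and "N \<ge> 1"
  shows "AE \<omega> in M.
           nn_cond_exp M (gen_sigma M (\<Union>n\<in>{1..N}. {AS_lo X xstar n, AS_hi X xstar n}))
              (\<lambda>\<omega>'. ennreal (exp (- G N \<omega>'))) \<omega>
           = ennreal (\<Sum>n=1..N. 1 / measure P_unif (AS_B X xstar n \<omega>))"
proof -
  interpret AS_star_process M xstar G X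
    by (rule AS_star_process.intro[OF assms(1) _ _ assms(11)]) (use assms(5) in auto)
  have "exp_neg_G N = (\<lambda>\<omega>'. ennreal (exp (- G N \<omega>')))"
    by (simp add: fun_eq_iff exp_neg_G_def)
  moreover have "sum_inv_P_B N \<omega> = ennreal (\<Sum>n=1..N. 1 / measure P_unif (AS_B X xstar n \<omega>))" for \<omega>
    by (simp add: sum_inv_P_B_def P_B_def)
  ultimately show ?thesis
    using cond_exp_exp_neg_G_bounds[OF assms(12)] by simp
qed

end
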